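(* For every integer $n\ge 5$, $\mathrm{mob}(K(n,2))=\max\left\{4,\left\lfloor \frac{n-3}{2}\right\rfloor\right\}$.
   Context: The Kneser graph $K(n,2)$ has as vertices all $2$-element subsets of $\{1,\dots,n\}$, two vertices being adjacent iff the subsets are disjoint. A set $S$ of vertices is a general position set if no three distinct vertices of $S$ lie on a common shortest path. Place one robot on each vertex of a general position set $S$; robots move one at a time, and a move is legal if a robot moves to an adjacent unoccupied vertex and the new set of occupied vertices is again a general position set. $S$ is a mobile general position set if some finite sequence of legal moves results in every vertex being occupied by some robot at some moment. $\mathrm{mob}$ of a graph is the maximum cardinality of a mobile general position set of it. *)

theory Defs
  imports Main
begin

text \<open>Generic (simple, undirected) graphs given by a vertex set V and an
adjacency relation E.\<close>

definition walk :: "'a set \<Rightarrow> ('a \<Rightarrow> 'a \<Rightarrow> bool) \<Rightarrow> 'a list \<Rightarrow> bool" where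
  "walk V E p \<longleftrightarrow> p \<noteq> [] \<and> set p \<subseteq> V \<and>
     (\<forall>i. Suc i < length p \<longrightarrow> E (p ! i) (p ! Suc i))"

definition gdist :: "'a set \<Rightarrow> ('a \<Rightarrow> 'a \<Rightarrow> bool) \<Rightarrow> 'a \<Rightarrow> 'a \<Rightarrow> nat" where
  "gdist V E u v = (LEAST k. \<exists>p. walk V E p \<and> hd p = u \<and> last p = v \<and> length p = Suc k)"

definition shortest_path :: "'a set \<Rightarrow> ('a \<Rightarrow> 'a \<Rightarrow> bool) \<Rightarrow> 'a list \<Rightarrow> bool" where
  "shortest_path V E p \<longleftrightarrow> walk V E p \<and> length p = Suc (gdist V E (hd p) (last p))"

definition gp_set :: "'a set \<Rightarrow> ('a \<Rightarrow> 'a \<Rightarrow> bool) \<Rightarrow> 'a set \<Rightarrow> bool" where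
  "gp_set V E S \<longleftrightarrow> S \<subseteq> V \<and>
     \<not> (\<exists>p u v w. shortest_path V E p \<and> u \<in> S \<and> v \<in> S \<and> w \<in> S \<and>
              u \<noteq> v \<and> v \<noteq> w \<and> u \<noteq> w \<and> u \<in> set p \<and> v \<in> set p \<and> w \<in> set p)"

definition legal_move :: "'a set \<Rightarrow> ('a \<Rightarrow> 'a \<Rightarrow> bool) \<Rightarrow> 'a set \<Rightarrow> 'a set \<Rightarrow> bool" where
  "legal_move V E S S' \<longleftrightarrow> (\<exists>u v. u \<in> S \<and> v \<in> V \<and> v \<notin> S \<and> E u v \<and>
       S' = insert v (S - {u}) \<and> gp_set V E S')"

definition mobile_gp_set :: "'a set \<Rightarrow> ('a \<Rightarrow> 'a \<Rightarrow> bool) \<Rightarrow> 'a set \<Rightarrow> bool" where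
  "mobile_gp_set V E S \<longleftrightarrow> gp_set V E S \<and>
     (\<exists>cs. cs \<noteq> [] \<and> hd cs = S \<and>
        (\<forall>i. Suc i < length cs \<longrightarrow> legal_move V E (cs ! i) (cs ! Suc i)) \<and>
        V \<subseteq> \<Union> (set cs))"

definition mob :: "'a set \<Rightarrow> ('a \<Rightarrow> 'a \<Rightarrow> bool) \<Rightarrow> nat" where
  "mob V E = Max {card S | S. mobile_gp_set V E S}"

definition kneser2_V :: "nat \<Rightarrow> nat set set" where
  "kneser2_V n = {A. A \<subseteq> {1..n} \<and> card A = 2}"

definition kneser2_E :: "nat set \<Rightarrow> nat set \<Rightarrow> bool" where
  "kneser2_E A B \<longleftrightarrow> A \<inter> B = {}"

end

theory Submission
  imports Defs "HOL-Library.Transitive_Closure_Table"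
begin

text \<open>
In K(n,2) with n \<ge> 5 any two vertices are at distance at most 2, so a set of vertices is in
general position exactly when it induces no path on three vertices: no member is disjoint from
two distinct intersecting members. A family of at least four pairs with this property is
pairwise disjoint, a star (all pairs share a point), or contained in a 4-set. With k \<ge> 5
robots a move keeps at least four of them in place, which forces the new family to be of the
same type. Hence
a large star cannot move at all, a large family inside a 4-set never leaves it, and a large
pairwise disjoint family can only move a pair onto two uncovered points; when at most two
points are uncovered (n \<le> 2k + 2), the robots stay inside one fixed partition of {1..n} and
never visit two intersecting vertices. This gives mob \<le> max 4 ((n - 3) div 2). Conversely, a
star of four pairs reaches every vertex (leaves and centre can be exchanged through families
inside a 4-set), and a matching of k \<ge> 1 pairs with 2k + 3 \<le> n reaches every vertex because
at least three points always stay uncovered.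
\<close>

section \<open>Distances and general position\<close>

lemma walk_Cons_Cons: "walk V E (a # b # p) \<longleftrightarrow> a \<in> V \<and> E a b \<and> walk V E (b # p)"
  by (auto simp: walk_def nth_Cons less_Suc_eq_0_disj split: nat.splits)

lemma walk_singleton: "walk V E [a] \<longleftrightarrow> a \<in> V"
  by (simp add: walk_def)

lemma gdist_le_length:
  assumes "walk V E p" "hd p = u" "last p = v"
  shows "gdist V E u v < length p"
proof -
  have "length p = Suc (length p - 1)"
    using assms(1) by (simp add: walk_def)
  then show ?thesis
    unfolding gdist_def using assms by (metis (mono_tags, lifting) Least_le le_imp_less_Suc)
qed

lemma shortest_walk_exists:
  assumes "walk V E p" "hd p = u" "last p = v"
  obtains q where "shortest_path V E q" "hd q = u" "last q = v"
proof -
  have "length p = Suc (length p - 1)"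
    using assms(1) by (simp add: walk_def)
  then have "\<exists>q. walk V E q \<and> hd q = u \<and> last q = v \<and> length q = Suc (length p - 1)"
    using assms by blast
  then have "\<exists>q. walk V E q \<and> hd q = u \<and> last q = v \<and> length q = Suc (gdist V E u v)"
    unfolding gdist_def by (rule LeastI_ex[OF exI])
  with that show thesis
    unfolding shortest_path_def by auto
qed

lemma gdist_eq_2:
  assumes "a \<in> V" "w \<in> V" "b \<in> V" "E a w" "E w b" "a \<noteq> b" "\<not> E a b"
  shows "gdist V E a b = 2"
proof -
  have walk: "walk V E [a, w, b]"
    using assms by (simp add: walk_Cons_Cons walk_singleton)
  obtain q where q: "shortest_path V E q" "hd q = a" "last q = b"
    using shortest_walk_exists[OF walk] by auto
  have "length q \<noteq> 1" "length q \<noteq> 2"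
    using q assms by (auto simp: shortest_path_def walk_Cons_Cons length_Suc_conv numeral_2_eq_2)
  moreover have "length q = Suc (gdist V E a b)"
    using q by (simp add: shortest_path_def)
  moreover have "gdist V E a b < 3"
    using gdist_le_length[OF walk refl refl] by simp
  ultimately show ?thesis
    by linarith
qed

definition induced_P3_free :: "('a \<Rightarrow> 'a \<Rightarrow> bool) \<Rightarrow> 'a set \<Rightarrow> bool" where
  "induced_P3_free E S \<longleftrightarrow> (\<forall>a\<in>S. \<forall>b\<in>S. \<forall>w\<in>S. a \<noteq> b \<longrightarrow> E w a \<longrightarrow> E w b \<longrightarrow> E a b)"

lemma gp_set_imp_induced_P3_free:
  assumes "symp E" "irreflp_on V E" "gp_set V E S"
  shows "induced_P3_free E S"
  unfolding induced_P3_free_def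
proof (intro ballI impI, rule ccontr)
  fix a b w
  assume in_S: "a \<in> S" "b \<in> S" "w \<in> S" and "a \<noteq> b" "E w a" "E w b" "\<not> E a b"
  have V: "a \<in> V" "b \<in> V" "w \<in> V"
    using assms(3) in_S by (auto simp: gp_set_def)
  have "E a w"
    using \<open>E w a\<close> assms(1) by (blast dest: sympD)
  have "w \<noteq> a" "w \<noteq> b"
    using \<open>E w a\<close> \<open>E w b\<close> assms(2) V by (auto dest: irreflp_onD)
  have "gdist V E a b = 2"
    using gdist_eq_2[OF V(1,3,2) \<open>E a w\<close> \<open>E w b\<close> \<open>a \<noteq> b\<close> \<open>\<not> E a b\<close>] .
  then have "shortest_path V E [a, w, b]"
    using V \<open>E a w\<close> \<open>E w b\<close> by (simp add: shortest_path_def walk_Cons_Cons walk_singleton)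
  then show False
    using assms(3) in_S \<open>a \<noteq> b\<close> \<open>w \<noteq> a\<close> \<open>w \<noteq> b\<close> unfolding gp_set_def
    by (metis list.set_intros(1,2))
qed

lemma shortest_path_through_3_vertices:
  assumes diameter_2: "\<And>u v. u \<in> V \<Longrightarrow> v \<in> V \<Longrightarrow> gdist V E u v \<le> 2"
    and sp: "shortest_path V E p" and on_p: "u \<in> set p" "v \<in> set p" "w \<in> set p"
    and distinct: "u \<noteq> v" "v \<noteq> w" "u \<noteq> w"
  obtains x y z where "p = [x, y, z]" "{x, y, z} = {u, v, w}" "x \<noteq> z" "E x y" "E y z" "\<not> E x z"
proof -
  have walk: "walk V E p"
    using sp by (simp add: shortest_path_def)
  have "p \<noteq> []" "set p \<subseteq> V"
    using walk by (auto simp: walk_def)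
  then have "gdist V E (hd p) (last p) \<le> 2"
    by (intro diameter_2) auto
  then have "length p \<le> 3"
    using sp by (simp add: shortest_path_def)
  moreover have "3 \<le> length p"
    using card_mono[of "set p" "{u, v, w}"] card_length[of p] on_p distinct by auto
  ultimately have "length p = 3"
    by simp
  then obtain x y z where p: "p = [x, y, z]"
    by (auto simp: numeral_3_eq_3 length_Suc_conv)
  have "set p = {u, v, w}"
    using on_p distinct p by auto
  then have "distinct p"
    using distinct \<open>length p = 3\<close> by (intro card_distinct) auto
  moreover have "E x y" "E y z"
    using walk p by (auto simp: walk_Cons_Cons)
  moreover have "\<not> E x z"
  proof
    assume "E x z"
    then have "walk V E [x, z]"
      using walk p by (simp add: walk_Cons_Cons walk_singleton)
    then show False
      using gdist_le_length[of V E "[x, z]" x z] sp p by (simp add: shortest_path_def)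
  qed
  ultimately show thesis
    using that p \<open>set p = {u, v, w}\<close> by simp
qed

lemma induced_P3_free_imp_gp_set:
  assumes "symp E" and diameter_2: "\<And>u v. u \<in> V \<Longrightarrow> v \<in> V \<Longrightarrow> gdist V E u v \<le> 2"
    and "S \<subseteq> V" "induced_P3_free E S"
  shows "gp_set V E S"
  unfolding gp_set_def
proof (intro conjI assms(3) notI, elim exE conjE)
  fix p u v w
  assume "shortest_path V E p" "u \<in> S" "v \<in> S" "w \<in> S" "u \<noteq> v" "v \<noteq> w" "u \<noteq> w"
    "u \<in> set p" "v \<in> set p" "w \<in> set p"
  then obtain x y z where xyz: "{x, y, z} = {u, v, w}" "x \<noteq> z" "E y x" "E y z" "\<not> E x z"
    using shortest_path_through_3_vertices[OF diameter_2] sympD[OF assms(1)] by metis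
  moreover have "{x, y, z} \<subseteq> S"
    unfolding xyz(1) using \<open>u \<in> S\<close> \<open>v \<in> S\<close> \<open>w \<in> S\<close> by simp
  ultimately show False
    using assms(4) unfolding induced_P3_free_def by blast
qed

section \<open>Legal moves and mobility\<close>

lemma legal_move_gp_set: "legal_move V E S T \<Longrightarrow> gp_set V E T"
  unfolding legal_move_def by blast

lemma legal_move_card:
  assumes "legal_move V E X Y" "finite X"
  shows "card Y = card X"
proof -
  obtain u v where "u \<in> X" "v \<notin> X" "Y = insert v (X - {u})"
    using assms(1) unfolding legal_move_def by blast
  then show ?thesis
    using assms(2) card_Suc_Diff1 by fastforce
qed

lemma legal_move_sym:
  assumes "symp E" "gp_set V E S" "legal_move V E S T"
  shows "legal_move V E T S"
proof -
  obtain u v where uv: "u \<in> S" "v \<notin> S" "E u v" "T = insert v (S - {u})"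
    using assms(3) unfolding legal_move_def by blast
  have "v \<in> T" "u \<notin> T" "S = insert u (T - {v})"
    using uv by auto
  moreover have "u \<in> V"
    using assms(2) uv(1) by (auto simp: gp_set_def)
  moreover have "E v u"
    using assms(1) uv(3) by (rule sympD)
  ultimately show ?thesis
    unfolding legal_move_def using assms(2) by blast
qed

lemma reachable_gp_set:
  assumes "(legal_move V E)\<^sup>*\<^sup>* S T" "gp_set V E S"
  shows "gp_set V E T"
  using assms by (cases rule: rtranclp.cases) (simp_all add: legal_move_gp_set)

lemma reachable_sym:
  assumes "symp E" "(legal_move V E)\<^sup>*\<^sup>* S T" "gp_set V E S"
  shows "(legal_move V E)\<^sup>*\<^sup>* T S"
  using assms(2)
proof (induction rule: rtranclp_induct)
  case base
  show ?case
    by (rule rtranclp.rtrancl_refl)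
next
  case (step X Y)
  have "legal_move V E Y X"
    using legal_move_sym[OF assms(1) reachable_gp_set[OF step.hyps(1) assms(3)] step.hyps(2)] .
  then show ?case
    using step.IH by (rule converse_rtranclp_into_rtranclp)
qed

lemma rtrancl_path_successively: "rtrancl_path r x ys y \<Longrightarrow> successively r (x # ys)"
  by (induction rule: rtrancl_path.induct) (simp_all add: successively_Cons)

lemma rtranclp_if_successively:
  "successively r (x # ys) \<Longrightarrow> y \<in> set (x # ys) \<Longrightarrow> r\<^sup>*\<^sup>* x y"
proof (induction ys arbitrary: x)
  case Nil
  then show ?case
    by simp
next
  case (Cons z ys)
  then have "r x z" "successively r (z # ys)"
    by simp_all
  then show ?case
    using Cons by (metis converse_rtranclp_into_rtranclp rtranclp.rtrancl_refl set_ConsD)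
qed

lemma mobile_gp_set_reaches:
  assumes "mobile_gp_set V E S" "x \<in> V"
  obtains T where "(legal_move V E)\<^sup>*\<^sup>* S T" "x \<in> T"
proof -
  obtain cs where cs: "cs \<noteq> []" "hd cs = S" "successively (legal_move V E) cs" "V \<subseteq> \<Union> (set cs)"
    using assms(1) unfolding mobile_gp_set_def successively_conv_nth by blast
  then obtain ys where "cs = S # ys"
    by (metis list.collapse)
  moreover obtain T where "T \<in> set cs" "x \<in> T"
    using cs(4) assms(2) by blast
  ultimately show thesis
    using that cs(3) rtranclp_if_successively by metis
qed

lemma not_mobile_if_invariant:
  assumes "P S" "\<And>X Y. P X \<Longrightarrow> legal_move V E X Y \<Longrightarrow> P Y"
    "\<And>X. P X \<Longrightarrow> x \<notin> X" "x \<in> V"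
  shows "\<not> mobile_gp_set V E S"
proof
  assume "mobile_gp_set V E S"
  then obtain T where "(legal_move V E)\<^sup>*\<^sup>* S T" "x \<in> T"
    using assms(4) by (rule mobile_gp_set_reaches)
  moreover from this(1) have "P T"
  proof (induction rule: rtranclp_induct)
    case base
    show ?case
      by (rule assms(1))
  next
    case (step X Y)
    then show ?case
      using assms(2) by blast
  qed
  ultimately show False
    using assms(3) by blast
qed

lemma mobile_gp_setI:
  assumes "finite V" "symp E" "gp_set V E S"
    and covers: "\<And>x. x \<in> V \<Longrightarrow> \<exists>T. (legal_move V E)\<^sup>*\<^sup>* S T \<and> x \<in> T"
  shows "mobile_gp_set V E S"
proof -
  let ?R = "legal_move V E"
  have "\<exists>ys. rtrancl_path ?R S ys S \<and> X \<subseteq> \<Union> (set (S # ys))" if "finite X" "X \<subseteq> V" for X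
    using that
  proof (induction X rule: finite_induct)
    case empty
    show ?case
      using rtrancl_path.base[of ?R S] by blast
  next
    case (insert x X)
    then obtain ys where ys: "rtrancl_path ?R S ys S" "X \<subseteq> \<Union> (set (S # ys))"
      by auto
    obtain T where T: "?R\<^sup>*\<^sup>* S T" "x \<in> T"
      using covers insert.prems by blast
    obtain zs1 zs2 where "rtrancl_path ?R S zs1 T" "rtrancl_path ?R T zs2 S"
      using T(1) reachable_sym[OF assms(2) T(1) assms(3)] by (meson rtranclp_eq_rtrancl_path)
    moreover have "T \<in> set (S # zs1)"
      using calculation(1) by (induction rule: rtrancl_path.induct) auto
    ultimately have "rtrancl_path ?R S (ys @ zs1 @ zs2) S" "x \<in> \<Union> (set (S # zs1))"
      using ys(1) T(2) by (auto intro: rtrancl_path_trans)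
    moreover have "insert x X \<subseteq> \<Union> (set (S # ys @ zs1 @ zs2))"
      using ys(2) calculation(2) by auto
    ultimately show ?case
      by blast
  qed
  then obtain ys where "rtrancl_path ?R S ys S" "V \<subseteq> \<Union> (set (S # ys))"
    using assms(1) by blast
  then show ?thesis
    unfolding mobile_gp_set_def using assms(3) rtrancl_path_successively
    by (metis list.distinct(1) list.sel(1) successively_conv_nth)
qed

lemma mob_eqI:
  assumes "finite V" and upper: "\<And>S. mobile_gp_set V E S \<Longrightarrow> card S \<le> m"
    and "mobile_gp_set V E S\<^sub>0" "card S\<^sub>0 = m"
  shows "mob V E = m"
  unfolding mob_def
proof (rule Max_eqI)
  have "{card S | S. mobile_gp_set V E S} \<subseteq> {..card V}"
    using card_mono[OF \<open>finite V\<close>] by (auto simp: mobile_gp_set_def gp_set_def)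
  then show "finite {card S | S. mobile_gp_set V E S}"
    using finite_subset by blast
qed (use assms in auto)

section \<open>The Kneser graph K(n,2)\<close>

abbreviation kneser2_move :: "nat \<Rightarrow> nat set set \<Rightarrow> nat set set \<Rightarrow> bool" where
  "kneser2_move n \<equiv> legal_move (kneser2_V n) kneser2_E"

lemma finite_kneser2_V: "finite (kneser2_V n)"
  by (rule finite_subset[of _ "Pow {1..n}"]) (auto simp: kneser2_V_def)

lemma kneser2_V_pair: "p \<in> {1..n} \<Longrightarrow> q \<in> {1..n} \<Longrightarrow> p \<noteq> q \<Longrightarrow> {p, q} \<in> kneser2_V n"
  by (simp add: kneser2_V_def)

lemma kneser2_V_elim:
  assumes "a \<in> kneser2_V n"
  obtains p q where "a = {p, q}" "p \<noteq> q" "p \<in> {1..n}" "q \<in> {1..n}"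
proof -
  obtain p q where "a = {p, q}" "p \<noteq> q"
    using assms by (auto simp: kneser2_V_def card_2_iff)
  then show thesis
    using that assms by (auto simp: kneser2_V_def)
qed

lemma symp_kneser2_E: "symp kneser2_E"
  by (auto simp: symp_def kneser2_E_def)

lemma irreflp_on_kneser2_E: "irreflp_on (kneser2_V n) kneser2_E"
  by (auto simp: irreflp_on_def kneser2_E_def kneser2_V_def)

lemma kneser2_common_neighbour:
  assumes "5 \<le> n" "a \<in> kneser2_V n" "b \<in> kneser2_V n" "a \<inter> b \<noteq> {}"
  obtains w where "w \<in> kneser2_V n" "w \<inter> a = {}" "w \<inter> b = {}"
proof -
  have "finite a" "finite b" "card a = 2" "card b = 2" "a \<union> b \<subseteq> {1..n}"
    using assms(2,3) by (auto simp: kneser2_V_def card_ge_0_finite)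
  moreover have "card (a \<inter> b) \<noteq> 0"
    using assms(4) calculation(1) by simp
  ultimately have "card (a \<union> b) \<le> 3"
    using card_Un_Int[of a b] by linarith
  then have "2 \<le> card ({1..n} - (a \<union> b))"
    using card_Diff_subset[OF finite_subset, of "a \<union> b" "{1..n}"] \<open>a \<union> b \<subseteq> {1..n}\<close> assms(1)
    by simp
  then obtain w where "w \<subseteq> {1..n} - (a \<union> b)" "card w = 2"
    by (meson obtain_subset_with_card_n)
  then show thesis
    using that[of w] by (auto simp: kneser2_V_def)
qed

lemma kneser2_gdist_le_2:
  assumes "5 \<le> n" "a \<in> kneser2_V n" "b \<in> kneser2_V n"
  shows "gdist (kneser2_V n) kneser2_E a b \<le> 2"
proof (cases "a \<inter> b = {}")
  case True
  then have "walk (kneser2_V n) kneser2_E [a, b]"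
    using assms by (simp add: walk_Cons_Cons walk_singleton kneser2_E_def)
  then show ?thesis
    using gdist_le_length[of _ _ "[a, b]"] by fastforce
next
  case False
  then obtain w where "w \<in> kneser2_V n" "w \<inter> a = {}" "w \<inter> b = {}"
    using kneser2_common_neighbour assms by blast
  then have "walk (kneser2_V n) kneser2_E [a, w, b]"
    using assms by (auto simp: walk_Cons_Cons walk_singleton kneser2_E_def)
  then show ?thesis
    using gdist_le_length[of _ _ "[a, w, b]"] by fastforce
qed

lemma kneser2_gp_set_iff:
  assumes "5 \<le> n"
  shows "gp_set (kneser2_V n) kneser2_E S \<longleftrightarrow> S \<subseteq> kneser2_V n \<and> induced_P3_free kneser2_E S"
proof
  assume "gp_set (kneser2_V n) kneser2_E S"
  then show "S \<subseteq> kneser2_V n \<and> induced_P3_free kneser2_E S"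
    using gp_set_imp_induced_P3_free[OF symp_kneser2_E irreflp_on_kneser2_E]
    by (simp add: gp_set_def)
next
  assume "S \<subseteq> kneser2_V n \<and> induced_P3_free kneser2_E S"
  then show "gp_set (kneser2_V n) kneser2_E S"
    using induced_P3_free_imp_gp_set[OF symp_kneser2_E kneser2_gdist_le_2[OF assms]] by blast
qed

lemma kneser2_P3_freeD:
  "induced_P3_free kneser2_E S \<Longrightarrow> a \<in> S \<Longrightarrow> b \<in> S \<Longrightarrow> w \<in> S \<Longrightarrow> a \<noteq> b \<Longrightarrow>
    w \<inter> a = {} \<Longrightarrow> w \<inter> b = {} \<Longrightarrow> a \<inter> b = {}"
  unfolding induced_P3_free_def kneser2_E_def by blast

lemma kneser2_P3_free_if_disjoint: "pairwise disjnt S \<Longrightarrow> induced_P3_free kneser2_E S"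
  by (auto simp: induced_P3_free_def kneser2_E_def pairwise_def disjnt_def)

lemma kneser2_P3_free_if_star: "\<forall>a\<in>S. x \<in> a \<Longrightarrow> induced_P3_free kneser2_E S"
  by (auto simp: induced_P3_free_def kneser2_E_def)

lemma kneser2_P3_free_if_in_4set:
  assumes "\<forall>a\<in>S. card a = 2" "\<Union>S \<subseteq> T" "card T = 4"
  shows "induced_P3_free kneser2_E S"
  unfolding induced_P3_free_def kneser2_E_def
proof (intro ballI impI)
  fix a b w
  assume S: "a \<in> S" "b \<in> S" "w \<in> S" and "a \<noteq> b" "w \<inter> a = {}" "w \<inter> b = {}"
  have "finite T"
    using assms(3) by (simp add: card_ge_0_finite)
  have "w \<subseteq> T" "a \<subseteq> T - w" "b \<subseteq> T - w"
    using S assms(2) \<open>w \<inter> a = {}\<close> \<open>w \<inter> b = {}\<close> by blast+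
  then have "card (T - w) = 2"
    using assms S \<open>finite T\<close> by (simp add: card_Diff_subset finite_subset)
  then have "a = T - w" "b = T - w"
    using \<open>finite T\<close> \<open>a \<subseteq> T - w\<close> \<open>b \<subseteq> T - w\<close> assms(1) S
    by (simp_all add: card_subset_eq)
  then show "a \<inter> b = {}"
    using \<open>a \<noteq> b\<close> by simp
qed

lemma kneser2_legal_moveE:
  assumes "5 \<le> n" "kneser2_move n X Y"
  obtains u v where "u \<in> X" "v \<in> kneser2_V n" "v \<notin> X" "u \<inter> v = {}" "Y = insert v (X - {u})"
    "Y \<subseteq> kneser2_V n" "induced_P3_free kneser2_E Y"
  using assms kneser2_gp_set_iff[OF assms(1)] unfolding legal_move_def kneser2_E_def by metis

lemma kneser2_legal_moveI:
  assumes "5 \<le> n" "u \<notin> R" "v \<notin> R" "u \<inter> v = {}" "insert u R \<subseteq> kneser2_V n" "v \<in> kneser2_V n"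
    "induced_P3_free kneser2_E (insert v R)"
  shows "kneser2_move n (insert u R) (insert v R)"
proof -
  have "u \<noteq> v"
    using assms(4,6) by (auto simp: kneser2_V_def)
  then have "v \<notin> insert u R" "insert v R = insert v (insert u R - {u})"
    using assms(2,3) by auto
  moreover have "gp_set (kneser2_V n) kneser2_E (insert v R)"
    using kneser2_gp_set_iff[OF assms(1)] assms(5-7) by auto
  ultimately show ?thesis
    unfolding legal_move_def kneser2_E_def using assms(4,6) by blast
qed

section \<open>Families of pairs without an induced P3\<close>

lemma card_pairs_le_choose_2:
  assumes "\<forall>a\<in>R. card a = 2" "\<Union>R \<subseteq> U" "finite U"
  shows "card R \<le> card U choose 2"
proof -
  have "card R \<le> card {B. B \<subseteq> U \<and> card B = 2}"
    using assms by (intro card_mono) auto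
  also have "\<dots> = card U choose 2"
    using n_subsets[OF assms(3)] .
  finally show ?thesis .
qed

lemma card_2_obtain_other:
  assumes "card a = 2" "x \<in> a"
  obtains y where "a = {x, y}" "y \<noteq> x"
proof -
  obtain p q where "a = {p, q}" "p \<noteq> q"
    using assms(1) by (auto simp: card_2_iff)
  show thesis
  proof (cases "x = p")
    case True
    then show thesis
      using that[of q] \<open>a = {p, q}\<close> \<open>p \<noteq> q\<close> by simp
  next
    case False
    then have "x = q"
      using assms(2) \<open>a = {p, q}\<close> by simp
    then show thesis
      using that[of p] \<open>a = {p, q}\<close> \<open>p \<noteq> q\<close> by (simp add: insert_commute)
  qed
qed

lemma card_star_pairs_le:
  assumes "\<forall>a\<in>R. card a = 2" "\<forall>a\<in>R. x \<in> a" "\<Union>R \<subseteq> T" "finite T"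
  shows "card R \<le> card (T - {x})"
proof -
  have "R \<subseteq> (\<lambda>t. {x, t}) ` (T - {x})"
  proof
    fix a
    assume "a \<in> R"
    then obtain t where "a = {x, t}" "t \<noteq> x"
      using assms(1,2) card_2_obtain_other[of a x] by blast
    then show "a \<in> (\<lambda>t. {x, t}) ` (T - {x})"
      using \<open>a \<in> R\<close> assms(3) by blast
  qed
  then have "card R \<le> card ((\<lambda>t. {x, t}) ` (T - {x}))"
    using assms(4) by (intro card_mono) auto
  also have "\<dots> \<le> card (T - {x})"
    by (rule card_image_le) (use assms(4) in simp)
  finally show ?thesis .
qed

lemma card_Union_disjoint_pairs:
  assumes "\<forall>a\<in>R. card a = 2" "pairwise disjnt R"
  shows "card (\<Union>R) = 2 * card R"
proof -
  have "card (\<Union>R) = sum card R"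
    using assms by (intro card_Union_disjoint) (auto simp: card_ge_0_finite)
  then show ?thesis
    using assms(1) by simp
qed

lemma card_disjoint_pairs_le:
  assumes "\<forall>a\<in>R. card a = 2" "pairwise disjnt R" "\<Union>R \<subseteq> T" "finite T"
  shows "2 * card R \<le> card T"
  using card_Union_disjoint_pairs[OF assms(1,2)] card_mono[OF assms(4,3)] by simp

lemma pairs_in_4set_cover:
  assumes "\<forall>a\<in>R. card a = 2" "\<Union>R \<subseteq> T" "card T = 4" "4 \<le> card R"
  shows "\<Union>R = T"
proof (rule ccontr)
  assume "\<Union>R \<noteq> T"
  then obtain t where "t \<in> T" "\<Union>R \<subseteq> T - {t}"
    using assms(2) by blast
  moreover have "finite T"
    using assms(3) by (simp add: card_ge_0_finite)
  ultimately have "card R \<le> card (T - {t}) choose 2"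
    using assms(1) by (intro card_pairs_le_choose_2) auto
  also have "\<dots> = 3"
    using \<open>t \<in> T\<close> assms(3) by (simp add: numeral_3_eq_3 numeral_2_eq_2)
  finally show False
    using assms(4) by simp
qed

lemma not_disjoint_if_star:
  assumes "\<forall>a\<in>R. x \<in> a" "2 \<le> card R"
  shows "\<not> pairwise disjnt R"
proof -
  have "finite R"
    using assms(2) by (intro card_ge_0_finite) simp
  then have "\<not> (\<forall>a\<in>R. \<forall>b\<in>R. a = b)"
    using card_le_Suc0_iff_eq[of R] assms(2) by simp
  then obtain a b where "a \<in> R" "b \<in> R" "a \<noteq> b"
    by blast
  then show ?thesis
    using assms(1) unfolding pairwise_def disjnt_def by blast
qed

lemma intersecting_pairs_star:
  assumes "\<forall>a\<in>R. card a = 2" "\<forall>a\<in>R. \<forall>b\<in>R. a \<inter> b \<noteq> {}" "4 \<le> card R"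
  shows "\<exists>x. \<forall>a\<in>R. x \<in> a"
proof (rule ccontr)
  assume no_star: "\<not> ?thesis"
  have "R \<noteq> {}"
    using assms(3) by auto
  then obtain a where "a \<in> R"
    by blast
  then obtain x y where a: "a = {x, y}" "x \<noteq> y"
    using assms(1) by (auto simp: card_2_iff)
  obtain b c where bc: "b \<in> R" "x \<notin> b" "c \<in> R" "y \<notin> c"
    using no_star by meson
  have "a \<inter> b \<noteq> {}" "a \<inter> c \<noteq> {}"
    using assms(2) \<open>a \<in> R\<close> bc by simp_all
  then have "y \<in> b" "x \<in> c"
    using a bc by auto
  obtain z where "b = {y, z}" "z \<noteq> y"
    using card_2_obtain_other[OF _ \<open>y \<in> b\<close>] bc assms(1) by blast
  moreover obtain t where "c = {x, t}" "t \<noteq> x"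
    using card_2_obtain_other[OF _ \<open>x \<in> c\<close>] bc assms(1) by blast
  moreover have "b \<inter> c \<noteq> {}"
    using assms(2) bc by blast
  ultimately have triangle: "b = {y, z}" "c = {x, z}" "z \<noteq> x" "z \<noteq> y"
    using bc a by auto
  have "f \<subseteq> {x, y, z}" if f: "f \<in> R" for f
  proof -
    obtain q r where "f = {q, r}"
      using assms(1) f by (auto simp: card_2_iff)
    moreover have "f \<inter> a \<noteq> {}" "f \<inter> b \<noteq> {}" "f \<inter> c \<noteq> {}"
      using assms(2) f \<open>a \<in> R\<close> bc by blast+
    ultimately show ?thesis
      using a triangle by auto
  qed
  then have "card R \<le> card {x, y, z} choose 2"
    using assms(1) by (intro card_pairs_le_choose_2) blast+
  also have "\<dots> = 3"
    using a triangle by (simp add: numeral_3_eq_3 numeral_2_eq_2)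
  finally show False
    using assms(3) by simp
qed

lemma kneser2_P3_free_in_disjoint_pair_union:
  assumes two: "\<forall>a\<in>S. card a = 2" and P3: "induced_P3_free kneser2_E S"
    and cd: "c \<in> S" "d \<in> S" "c \<inter> d = {}" and e: "e \<in> S" "e \<noteq> c" "e \<inter> c \<noteq> {}"
  shows "\<Union>S \<subseteq> c \<union> d"
proof -
  have meets: "w \<inter> b \<noteq> {}" if "a \<in> S" "b \<in> S" "w \<in> S" "a \<noteq> b" "a \<inter> b \<noteq> {}" "w \<inter> a = {}"
    for a b w
    using kneser2_P3_freeD[OF P3 that(1-4) that(6)] that(5) by blast
  have "e \<inter> d \<noteq> {}"
    using meets[OF cd(1) e(1) cd(2)] e(2,3) cd(3) by (auto simp: Int_commute)
  have "f \<subseteq> c \<union> d" if f: "f \<in> S" "f \<noteq> c" "f \<noteq> d" for f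
  proof (cases "f \<inter> c = {}")
    case True
    have "f \<inter> d = {}"
      using meets[OF cd(2) f(1) cd(1)] f(3) True cd(3) by (auto simp: Int_commute)
    moreover have "f \<inter> e \<noteq> {}"
      using meets[OF cd(1) e(1) f(1)] e(2,3) True by (auto simp: Int_commute)
    moreover obtain p q where "e = {p, q}"
      using two e(1) by (auto simp: card_2_iff)
    ultimately have False
      using True cd(3) \<open>e \<inter> d \<noteq> {}\<close> e(3) by auto
    then show ?thesis ..
  next
    case False
    then have "f \<inter> d \<noteq> {}"
      using meets[OF cd(1) f(1) cd(2)] f(2) cd(3) by (auto simp: Int_commute)
    moreover obtain p q where "f = {p, q}"
      using two f(1) by (auto simp: card_2_iff)
    ultimately show ?thesis
      using False cd(3) by auto
  qed
  then show ?thesis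
    by auto
qed

lemma kneser2_P3_free_cases:
  assumes two: "\<forall>a\<in>S. card a = 2" and P3: "induced_P3_free kneser2_E S" and "4 \<le> card S"
  shows "pairwise disjnt S \<or> (\<exists>x. \<forall>a\<in>S. x \<in> a) \<or> (\<exists>T. card T = 4 \<and> \<Union>S \<subseteq> T)"
proof -
  consider (disjoint) "pairwise disjnt S"
    | (intersecting) "\<forall>a\<in>S. \<forall>b\<in>S. a \<inter> b \<noteq> {}"
    | (mixed) a b c d where "a \<in> S" "b \<in> S" "a \<noteq> b" "a \<inter> b \<noteq> {}" "c \<in> S" "d \<in> S" "c \<inter> d = {}"
    unfolding pairwise_def disjnt_def by blast
  then show ?thesis
  proof cases
    case intersecting
    then show ?thesis
      using intersecting_pairs_star[OF two _ assms(3)] by blast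
  next
    case mixed
    have "\<exists>e\<in>S. e \<noteq> c \<and> e \<inter> c \<noteq> {}"
    proof (rule ccontr)
      assume "\<not> ?thesis"
      then have "a = c \<or> a \<inter> c = {}" "b = c \<or> b \<inter> c = {}"
        using mixed(1,2) by blast+
      then show False
        using kneser2_P3_freeD[OF P3 mixed(1,2,5,3)] mixed(3,4) by (auto simp: Int_commute)
    qed
    then have "\<Union>S \<subseteq> c \<union> d"
      using kneser2_P3_free_in_disjoint_pair_union[OF two P3 mixed(5-7)] by blast
    moreover have "card (c \<union> d) = 4"
      using two mixed(5-7) by (simp add: card_Un_disjoint card_ge_0_finite)
    ultimately show ?thesis
      by blast
  qed simp
qed

lemma star_pairs_centre_unique:
  assumes "\<forall>a\<in>R. card a = 2" "\<forall>a\<in>R. x \<in> a" "\<forall>a\<in>R. y \<in> a" "2 \<le> card R"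
  shows "x = y"
proof (rule ccontr)
  assume "x \<noteq> y"
  then have "a = {x, y}" if "a \<in> R" for a
    using card_subset_eq[of a "{x, y}"] that assms(1-3) by (auto simp: card_ge_0_finite)
  then have "card R \<le> card {{x, y}}"
    by (intro card_mono) auto
  then show False
    using assms(4) by simp
qed

lemma card_star_pairs_in_4set:
  assumes "\<forall>a\<in>R. card a = 2" "\<forall>a\<in>R. x \<in> a" "\<Union>R \<subseteq> T" "card T = 4"
  shows "card R \<le> 3"
proof (cases "R = {}")
  case False
  then have "x \<in> T"
    using assms(2,3) by blast
  then show ?thesis
    using card_star_pairs_le[OF assms(1-3)] assms(4) by (simp add: card_ge_0_finite)
qed simp

lemma kneser2_P3_free_superset_cases:
  assumes two: "\<forall>a\<in>Y. card a = 2" and P3: "induced_P3_free kneser2_E Y" and "finite Y"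
    and R: "R \<subseteq> Y" "4 \<le> card R"
  obtains (disjoint) "pairwise disjnt Y" "pairwise disjnt R"
    | (star) y where "\<forall>a\<in>Y. y \<in> a" "\<forall>a\<in>R. y \<in> a"
    | (in_4set) T where "card T = 4" "\<Union>Y \<subseteq> T" "\<Union>R \<subseteq> T"
proof -
  have "card R \<le> card Y"
    using card_mono[OF \<open>finite Y\<close> R(1)] .
  then consider "pairwise disjnt Y" | y where "\<forall>a\<in>Y. y \<in> a" | T where "card T = 4" "\<Union>Y \<subseteq> T"
    using kneser2_P3_free_cases[OF two P3] R(2) by fastforce
  then show thesis
    using that pairwise_subset[OF _ R(1)] R(1) by (cases; blast)
qed

lemma kneser2_P3_free_superset_star:
  assumes "\<forall>a\<in>Y. card a = 2" "induced_P3_free kneser2_E Y" "finite Y"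
    and R: "R \<subseteq> Y" "4 \<le> card R" "\<forall>a\<in>R. x \<in> a"
  shows "\<forall>a\<in>Y. x \<in> a"
proof -
  have two_R: "\<forall>a\<in>R. card a = 2"
    using assms(1) R(1) by blast
  show ?thesis
  proof (cases rule: kneser2_P3_free_superset_cases[OF assms(1-3) R(1,2), case_names disjoint star in_4set])
    case disjoint
    then show ?thesis
      using not_disjoint_if_star[OF R(3)] R(2) by simp
  next
    case (star y)
    then show ?thesis
      using star_pairs_centre_unique[OF two_R R(3) star(2)] R(2) by simp
  next
    case (in_4set T)
    then show ?thesis
      using card_star_pairs_in_4set[OF two_R R(3)] R(2) by fastforce
  qed
qed

lemma kneser2_P3_free_superset_in_4set:
  assumes "\<forall>a\<in>Y. card a = 2" "induced_P3_free kneser2_E Y" "finite Y"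
    and R: "R \<subseteq> Y" "4 \<le> card R" "\<Union>R \<subseteq> T" and T: "card T = 4"
  shows "\<Union>Y \<subseteq> T"
proof -
  have two_R: "\<forall>a\<in>R. card a = 2"
    using assms(1) R(1) by blast
  show ?thesis
  proof (cases rule: kneser2_P3_free_superset_cases[OF assms(1-3) R(1,2), case_names disjoint star in_4set])
    case disjoint
    then show ?thesis
      using card_disjoint_pairs_le[OF two_R _ R(3)] T R(2) by (fastforce simp: card_ge_0_finite)
  next
    case (star y)
    then show ?thesis
      using card_star_pairs_in_4set[OF two_R _ R(3) T] R(2) by fastforce
  next
    case (in_4set T')
    have "T \<subseteq> T'"
      using pairs_in_4set_cover[OF two_R R(3) T R(2)] in_4set(3) by blast
    then have "T = T'"
      using card_subset_eq[of T' T] in_4set(1) T by (simp add: card_ge_0_finite)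
    then show ?thesis
      using in_4set(2) by simp
  qed
qed

lemma kneser2_P3_free_superset_disjoint:
  assumes "\<forall>a\<in>Y. card a = 2" "induced_P3_free kneser2_E Y" "finite Y"
    and R: "R \<subseteq> Y" "4 \<le> card R" "pairwise disjnt R"
  shows "pairwise disjnt Y"
proof -
  have two_R: "\<forall>a\<in>R. card a = 2"
    using assms(1) R(1) by blast
  show ?thesis
  proof (cases rule: kneser2_P3_free_superset_cases[OF assms(1-3) R(1,2), case_names disjoint star in_4set])
    case (star y)
    then show ?thesis
      using not_disjoint_if_star[of R y] R(2,3) by simp
  next
    case (in_4set T)
    then show ?thesis
      using card_disjoint_pairs_le[OF two_R R(3) in_4set(3)] R(2) by (simp add: card_ge_0_finite)
  qed
qed

section \<open>Upper bound\<close>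

lemma kneser2_large_moveE:
  assumes "5 \<le> n" "X \<subseteq> kneser2_V n" "5 \<le> card X" "kneser2_move n X Y"
  obtains u v where "u \<in> X" "v \<in> kneser2_V n" "v \<notin> X" "u \<inter> v = {}" "Y = insert v (X - {u})"
    "X - {u} \<subseteq> Y" "4 \<le> card (X - {u})"
    "\<forall>a\<in>Y. card a = 2" "finite Y" "induced_P3_free kneser2_E Y"
proof -
  obtain u v where uv: "u \<in> X" "v \<in> kneser2_V n" "v \<notin> X" "u \<inter> v = {}"
    "Y = insert v (X - {u})" "Y \<subseteq> kneser2_V n" "induced_P3_free kneser2_E Y"
    using kneser2_legal_moveE[OF assms(1,4)] by metis
  moreover have "4 \<le> card (X - {u})"
    using uv(1) assms(3) by simp
  moreover have "\<forall>a\<in>Y. card a = 2" "finite Y"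
    using uv(6) finite_subset[OF uv(6) finite_kneser2_V] by (auto simp: kneser2_V_def)
  ultimately show thesis
    using that by blast
qed

lemma kneser2_no_move_from_large_star:
  assumes "5 \<le> n" "X \<subseteq> kneser2_V n" "5 \<le> card X" "\<forall>a\<in>X. x \<in> a"
  shows "\<not> kneser2_move n X Y"
proof
  assume "kneser2_move n X Y"
  then obtain u v where uv: "u \<in> X" "u \<inter> v = {}" "Y = insert v (X - {u})"
    and R: "X - {u} \<subseteq> Y" "4 \<le> card (X - {u})"
    and Y: "\<forall>a\<in>Y. card a = 2" "finite Y" "induced_P3_free kneser2_E Y"
    using kneser2_large_moveE[OF assms(1-3)] by metis
  have "\<forall>a\<in>Y. x \<in> a"
    using kneser2_P3_free_superset_star[OF Y(1,3,2) R] assms(4) by blast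
  then have "x \<in> v"
    using uv(3) by simp
  then show False
    using uv(1,2) assms(4) by blast
qed

lemma kneser2_move_stays_in_4set:
  assumes "5 \<le> n" "X \<subseteq> kneser2_V n" "5 \<le> card X" "\<Union>X \<subseteq> T" "card T = 4"
    "kneser2_move n X Y"
  shows "\<Union>Y \<subseteq> T"
proof -
  obtain u where R: "X - {u} \<subseteq> Y" "4 \<le> card (X - {u})"
    and Y: "\<forall>a\<in>Y. card a = 2" "finite Y" "induced_P3_free kneser2_E Y"
    using kneser2_large_moveE[OF assms(1-3,6)] by metis
  show ?thesis
    using kneser2_P3_free_superset_in_4set[OF Y(1,3,2) R _ assms(5)] assms(4) by blast
qed

lemma kneser2_move_from_large_disjoint:
  assumes "5 \<le> n" "X \<subseteq> kneser2_V n" "5 \<le> card X" "pairwise disjnt X"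
    "kneser2_move n X Y"
  obtains u v where "u \<in> X" "v \<in> kneser2_V n" "v \<inter> \<Union>X = {}" "Y = insert v (X - {u})"
    "pairwise disjnt Y"
proof -
  obtain u v where uv: "u \<in> X" "v \<in> kneser2_V n" "v \<notin> X" "u \<inter> v = {}"
    "Y = insert v (X - {u})" and R: "X - {u} \<subseteq> Y" "4 \<le> card (X - {u})"
    and Y: "\<forall>a\<in>Y. card a = 2" "finite Y" "induced_P3_free kneser2_E Y"
    using kneser2_large_moveE[OF assms(1-3,5)] by metis
  have "pairwise disjnt (X - {u})"
    using assms(4) by (rule pairwise_subset) blast
  then have "pairwise disjnt Y"
    using kneser2_P3_free_superset_disjoint[OF Y(1,3,2) R] by blast
  moreover have "v \<inter> a = {}" if "a \<in> X" for a
  proof (cases "a = u")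
    case False
    then have "a \<in> Y" "v \<in> Y" "v \<noteq> a"
      using that uv(3,5) by auto
    then show ?thesis
      using pairwiseD[OF \<open>pairwise disjnt Y\<close>] by (simp add: disjnt_def)
  qed (use uv(4) in blast)
  ultimately show thesis
    using that uv by blast
qed

lemma kneser2_vertex_notin_disjoint:
  assumes "3 \<le> n" "pairwise disjnt M"
  obtains x where "x \<in> kneser2_V n" "x \<notin> M"
proof -
  have "{1, 2} \<in> kneser2_V n" "{1, 3} \<in> kneser2_V n"
    using assms(1) by (simp_all add: kneser2_V_pair)
  moreover have "\<not> ({1, 2} \<in> M \<and> {1, 3} \<in> M)"
    using pairwiseD[OF assms(2), of "{1, 2}" "{1, 3}"] by (auto simp: disjnt_def doubleton_eq_iff)
  ultimately show thesis
    using that by blast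
qed

lemma kneser2_vertex_notin_star:
  assumes "4 \<le> n" "\<forall>a\<in>W. y \<in> a"
  obtains x where "x \<in> kneser2_V n" "x \<notin> W"
proof -
  have "{1, 2} \<in> kneser2_V n" "{3, 4} \<in> kneser2_V n"
    using assms(1) by (simp_all add: kneser2_V_pair)
  moreover have "\<not> ({1, 2} \<in> W \<and> {3, 4} \<in> W)"
  proof
    assume "{1, 2} \<in> W \<and> {3, 4} \<in> W"
    then have "y \<in> {1, 2}" "y \<in> {3, 4::nat}"
      by (intro bspec[OF assms(2)]; simp)+
    then show False
      by auto
  qed
  ultimately show thesis
    using that by blast
qed

lemma kneser2_vertex_outside_4set:
  assumes "5 \<le> n" "card T = 4"
  obtains x where "x \<in> kneser2_V n" "\<not> x \<subseteq> T"
proof -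
  have "\<not> {1..n} \<subseteq> T"
    using card_mono[of T "{1..n}"] assms by (auto simp: card_ge_0_finite)
  then obtain t where t: "t \<in> {1..n}" "t \<notin> T"
    by blast
  define s :: nat where "s = (if t = 1 then 2 else 1)"
  have "{s, t} \<in> kneser2_V n"
    using t assms(1) by (intro kneser2_V_pair) (auto simp: s_def)
  then show thesis
    using that t(2) by blast
qed

lemma kneser2_move_stays_in_partition:
  assumes n5: "5 \<le> n" and X: "X \<subseteq> kneser2_V n" "pairwise disjnt X" "5 \<le> card X"
    and M: "X \<subseteq> M" "card M = Suc (card X)" "\<Union>M = {1..n}" "\<forall>m\<in>M. card m \<le> 2"
    and move: "kneser2_move n X Y"
  shows "Y \<subseteq> M"
proof -
  obtain u v where uv: "v \<in> kneser2_V n" "v \<inter> \<Union>X = {}" "Y = insert v (X - {u})"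
    using kneser2_move_from_large_disjoint[OF n5 X(1,3,2) move] by metis
  have "finite X"
    using X(1) finite_subset[OF _ finite_kneser2_V] by blast
  then have "card (M - X) = 1"
    using M(1,2) by (simp add: card_Diff_subset)
  then obtain m where m: "M - X = {m}"
    by (rule card_1_singletonE)
  have "v \<subseteq> m"
  proof
    fix t
    assume "t \<in> v"
    then obtain b where "b \<in> M" "t \<in> b"
      using uv(1) M(3) by (auto simp: kneser2_V_def)
    moreover from this have "b \<notin> X"
      using \<open>t \<in> v\<close> uv(2) by blast
    ultimately show "t \<in> m"
      using m by blast
  qed
  moreover have "m \<in> M" "finite m"
    using m M(3) finite_subset[of m "{1..n}"] by auto
  ultimately have "v = m"
    using card_seteq[of m v] M(4) uv(1) by (auto simp: kneser2_V_def)
  then show ?thesis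
    using uv(3) M(1) \<open>m \<in> M\<close> by blast
qed

lemma disjoint_pairs_complete_partition:
  assumes two: "\<forall>a\<in>S. card a = 2" and disjoint: "pairwise disjnt S"
    and U: "\<Union>S \<subseteq> U" "finite U" "card U \<le> 2 * card S + 2"
  obtains M where "S \<subseteq> M" "card M = Suc (card S)" "\<Union>M = U" "\<forall>m\<in>M. card m \<le> 2"
    "pairwise disjnt M"
proof -
  define F where "F = U - \<Union>S"
  have "S \<subseteq> Pow U"
    using U(1) by blast
  then have "finite S"
    by (rule finite_subset) (simp add: U(2))
  have "card F \<le> 2"
    using card_Diff_subset[OF finite_subset[OF U(1,2)] U(1)] U(3) card_Union_disjoint_pairs[OF two disjoint]
    by (simp add: F_def)
  have "F \<notin> S"
  proof
    assume "F \<in> S"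
    then have "F = {}"
      unfolding F_def by blast
    then show False
      using two \<open>F \<in> S\<close> by fastforce
  qed
  moreover have "pairwise disjnt (insert F S)"
    using disjoint unfolding F_def pairwise_def disjnt_def by blast
  ultimately show thesis
    using that[of "insert F S"] \<open>finite S\<close> U(1) two \<open>card F \<le> 2\<close> by (auto simp: F_def)
qed

lemma kneser2_mobile_disjoint_card:
  assumes n5: "5 \<le> n" and mobile: "mobile_gp_set (kneser2_V n) kneser2_E S"
    and disjoint: "pairwise disjnt S" and large: "5 \<le> card S"
  shows "2 * card S + 3 \<le> n"
proof (rule ccontr)
  assume small: "\<not> ?thesis"
  have SV: "S \<subseteq> kneser2_V n"
    using mobile by (simp add: mobile_gp_set_def gp_set_def)
  then have two: "\<forall>a\<in>S. card a = 2" and "\<Union>S \<subseteq> {1..n}"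
    by (auto simp: kneser2_V_def)
  moreover have "card {1..n} \<le> 2 * card S + 2"
    using small by simp
  ultimately obtain M where M: "S \<subseteq> M" "card M = Suc (card S)" "\<Union>M = {1..n}"
    "\<forall>m\<in>M. card m \<le> 2" "pairwise disjnt M"
    using disjoint_pairs_complete_partition[OF two disjoint _ finite_atLeastAtMost] by metis
  let ?P = "\<lambda>X. X \<subseteq> kneser2_V n \<and> pairwise disjnt X \<and> card X = card S \<and> X \<subseteq> M"
  have invariant: "?P Y" if PX: "?P X" and move: "kneser2_move n X Y" for X Y
  proof -
    have "Y \<subseteq> kneser2_V n"
      using legal_move_gp_set[OF move] by (simp add: gp_set_def)
    moreover have "pairwise disjnt Y"
      using kneser2_move_from_large_disjoint[OF n5 _ _ _ move] PX large by metis
    moreover have "card Y = card S"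
      using legal_move_card[OF move] PX finite_subset[OF _ finite_kneser2_V] by metis
    moreover have "Y \<subseteq> M"
      using kneser2_move_stays_in_partition[OF n5 _ _ _ _ _ M(3,4) move] PX M(2) large by simp
    ultimately show ?thesis
      by blast
  qed
  have "3 \<le> n"
    using n5 by simp
  then obtain x where x: "x \<in> kneser2_V n" "x \<notin> M"
    using kneser2_vertex_notin_disjoint[OF _ M(5)] by blast
  have "\<not> mobile_gp_set (kneser2_V n) kneser2_E S"
  proof (rule not_mobile_if_invariant[where P = ?P and x = x])
    show "?P S"
      using SV disjoint M(1) by simp
    show "x \<notin> X" if "?P X" for X
      using that x(2) by blast
  qed (use invariant x(1) in blast)+
  then show False
    using mobile by simp
qed

lemma kneser2_large_star_not_mobile:
  assumes n5: "5 \<le> n" and S: "S \<subseteq> kneser2_V n" "5 \<le> card S" "\<forall>a\<in>S. y \<in> a"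
  shows "\<not> mobile_gp_set (kneser2_V n) kneser2_E S"
proof -
  have "4 \<le> n"
    using n5 by simp
  then obtain x where x: "x \<in> kneser2_V n" "x \<notin> S"
    using kneser2_vertex_notin_star[OF _ S(3)] by blast
  show ?thesis
  proof (rule not_mobile_if_invariant[where P = "\<lambda>X. X = S" and x = x])
    show "Y = S" if "X = S" "kneser2_move n X Y" for X Y
      using kneser2_no_move_from_large_star[OF n5 S] that by blast
  qed (use x in blast)+
qed

lemma kneser2_large_in_4set_not_mobile:
  assumes n5: "5 \<le> n" and S: "S \<subseteq> kneser2_V n" "5 \<le> card S" "\<Union>S \<subseteq> T" and T: "card T = 4"
  shows "\<not> mobile_gp_set (kneser2_V n) kneser2_E S"
proof -
  obtain x where x: "x \<in> kneser2_V n" "\<not> x \<subseteq> T"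
    using kneser2_vertex_outside_4set[OF n5 T] by blast
  let ?P = "\<lambda>X. X \<subseteq> kneser2_V n \<and> card X = card S \<and> \<Union>X \<subseteq> T"
  show ?thesis
  proof (rule not_mobile_if_invariant[where P = ?P and x = x])
    show "?P Y" if PX: "?P X" and move: "kneser2_move n X Y" for X Y
    proof (intro conjI)
      show "Y \<subseteq> kneser2_V n"
        using legal_move_gp_set[OF move] by (simp add: gp_set_def)
      show "card Y = card S"
        using legal_move_card[OF move] PX finite_subset[OF _ finite_kneser2_V] by metis
      show "\<Union>Y \<subseteq> T"
        using kneser2_move_stays_in_4set[OF n5 _ _ _ T move] PX S(2) by simp
    qed
  qed (use S x in blast)+
qed

lemma kneser2_mobile_card_bound:
  assumes n5: "5 \<le> n" and mobile: "mobile_gp_set (kneser2_V n) kneser2_E S"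
  shows "card S \<le> 4 \<or> 2 * card S + 3 \<le> n"
proof (rule ccontr)
  assume bounds_fail: "\<not> ?thesis"
  then have large: "5 \<le> card S"
    by simp
  have SV: "S \<subseteq> kneser2_V n" and P3: "induced_P3_free kneser2_E S"
    using mobile kneser2_gp_set_iff[OF n5] by (auto simp: mobile_gp_set_def)
  have "\<forall>a\<in>S. card a = 2"
    using SV by (auto simp: kneser2_V_def)
  then consider "pairwise disjnt S" | y where "\<forall>a\<in>S. y \<in> a" | T where "card T = 4" "\<Union>S \<subseteq> T"
    using kneser2_P3_free_cases[OF _ P3] large by fastforce
  then show False
  proof cases
    case 1
    then show False
      using kneser2_mobile_disjoint_card[OF n5 mobile 1 large] bounds_fail by simp
  next
    case (2 y)
    then show False
      using kneser2_large_star_not_mobile[OF n5 SV large] mobile by blast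
  next
    case (3 T)
    then show False
      using kneser2_large_in_4set_not_mobile[OF n5 SV large] mobile by blast
  qed
qed

section \<open>Stars are mobile\<close>

definition star_pairs :: "'a \<Rightarrow> 'a set \<Rightarrow> 'a set set" where
  "star_pairs x L = (\<lambda>t. {x, t}) ` L"

lemma star_pairs_insert: "star_pairs x (insert t L) = insert {x, t} (star_pairs x L)"
  by (simp add: star_pairs_def)

lemma card_star_pairs:
  assumes "x \<notin> L"
  shows "card (star_pairs x L) = card L"
proof -
  have "inj_on (\<lambda>t. {x, t}) L"
    using assms by (auto simp: inj_on_def doubleton_eq_iff)
  then show ?thesis
    by (simp add: star_pairs_def card_image)
qed

lemma star_pairs_subset_kneser2_V:
  "x \<in> {1..n} \<Longrightarrow> L \<subseteq> {1..n} \<Longrightarrow> x \<notin> L \<Longrightarrow> star_pairs x L \<subseteq> kneser2_V n"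
  unfolding star_pairs_def by (auto intro!: kneser2_V_pair)

lemma kneser2_P3_free_star_pairs: "induced_P3_free kneser2_E (star_pairs x L)"
  by (rule kneser2_P3_free_if_star[of _ x]) (auto simp: star_pairs_def)

lemma kneser2_gp_set_star_pairs:
  "5 \<le> n \<Longrightarrow> x \<in> {1..n} \<Longrightarrow> L \<subseteq> {1..n} \<Longrightarrow> x \<notin> L \<Longrightarrow>
    gp_set (kneser2_V n) kneser2_E (star_pairs x L)"
  using kneser2_gp_set_iff star_pairs_subset_kneser2_V kneser2_P3_free_star_pairs by blast

lemma kneser2_move_in_4set:
  assumes n5: "5 \<le> n" and T: "T \<subseteq> {1..n}" "card T = 4"
    and X: "\<forall>a\<in>insert v (insert u R). card a = 2" "\<Union>(insert v (insert u R)) \<subseteq> T"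
      "u \<inter> v = {}" "u \<notin> R" "v \<notin> R"
  shows "kneser2_move n (insert u R) (insert v R)"
proof (rule kneser2_legal_moveI[OF n5 X(4,5,3)])
  have "insert v (insert u R) \<subseteq> kneser2_V n"
    using X(1,2) T(1) by (auto simp: kneser2_V_def)
  then show "insert u R \<subseteq> kneser2_V n" "v \<in> kneser2_V n"
    by auto
  show "induced_P3_free kneser2_E (insert v R)"
    using X(1,2) by (intro kneser2_P3_free_if_in_4set[OF _ _ T(2)]) auto
qed

lemma kneser2_star_to_4set_move:
  assumes n5: "5 \<le> n" and x: "x \<in> {1..n}" and L: "L \<subseteq> {1..n}" "card L = 3" "x \<notin> L"
    and d: "d \<in> {1..n}" "d \<notin> insert x L" and bc: "b \<in> L" "c \<in> L" "b \<noteq> c"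
  shows "kneser2_move n (star_pairs x (insert d L)) (insert {b, c} (star_pairs x L))"
proof -
  let ?Q = "star_pairs x L"
  have QV: "?Q \<subseteq> kneser2_V n"
    using star_pairs_subset_kneser2_V[OF x L(1,3)] .
  have "{x, d} \<notin> ?Q"
    using d(2) unfolding star_pairs_def by (auto simp: doubleton_eq_iff)
  have "{b, c} \<notin> ?Q"
    using bc L(3) unfolding star_pairs_def by (auto simp: doubleton_eq_iff)
  have V: "{b, c} \<in> kneser2_V n" "{x, d} \<in> kneser2_V n"
    using x d bc L(1) by (auto intro!: kneser2_V_pair)
  have "induced_P3_free kneser2_E (insert {b, c} ?Q)"
  proof (rule kneser2_P3_free_if_in_4set)
    show "\<forall>a\<in>insert {b, c} ?Q. card a = 2"
      using QV V(1) by (auto simp: kneser2_V_def)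
    show "\<Union>(insert {b, c} ?Q) \<subseteq> insert x L"
      using bc by (auto simp: star_pairs_def)
    show "card (insert x L) = 4"
      using L by (simp add: card_ge_0_finite)
  qed
  then show ?thesis
    using \<open>{x, d} \<notin> ?Q\<close> \<open>{b, c} \<notin> ?Q\<close> QV V d(2) bc L(3)
    unfolding star_pairs_insert by (intro kneser2_legal_moveI[OF n5]) auto
qed

lemma kneser2_star_leaf_swap:
  assumes n5: "5 \<le> n" and x: "x \<in> {1..n}" and L: "L \<subseteq> {1..n}" "card L = 3" "x \<notin> L"
    and de: "d \<in> {1..n}" "e \<in> {1..n}" "d \<notin> insert x L" "e \<notin> insert x L"
  shows "(kneser2_move n)\<^sup>*\<^sup>* (star_pairs x (insert d L)) (star_pairs x (insert e L))"
proof -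
  obtain b c where bc: "b \<in> L" "c \<in> L" "b \<noteq> c"
    using L(2) by (metis card_3_iff insertI1 insertI2 singletonI)
  have "kneser2_move n (star_pairs x (insert d L)) (insert {b, c} (star_pairs x L))"
    using kneser2_star_to_4set_move[OF n5 x L de(1,3) bc] .
  then have "(kneser2_move n)\<^sup>*\<^sup>* (star_pairs x (insert d L)) (insert {b, c} (star_pairs x L))"
    by (rule r_into_rtranclp)
  also have "kneser2_move n (insert {b, c} (star_pairs x L)) (star_pairs x (insert e L))"
  proof (rule legal_move_sym[OF symp_kneser2_E])
    show "gp_set (kneser2_V n) kneser2_E (star_pairs x (insert e L))"
      using x L de by (intro kneser2_gp_set_star_pairs[OF n5]) auto
  qed (rule kneser2_star_to_4set_move[OF n5 x L de(2,4) bc])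
  finally show ?thesis .
qed

lemma kneser2_4set_centre_swap:
  assumes n5: "5 \<le> n" and range: "{x, a, b, c} \<subseteq> {1..n}" and D: "distinct [x, a, b, c]"
  shows "(kneser2_move n)\<^sup>*\<^sup>* {{x, a}, {x, b}, {x, c}, {b, c}} {{a, x}, {a, b}, {a, c}, {b, c}}"
proof -
  let ?T = "{x, a, b, c}"
  have T: "?T \<subseteq> {1..n}" "card ?T = 4"
    using range D by auto
  define Q1 where "Q1 = {{x, a}, {x, c}, {b, c}}"
  define Q2 where "Q2 = {{x, a}, {b, c}, {a, c}}"
  have "{{x, a}, {x, b}, {x, c}, {b, c}} = insert {x, b} Q1"
    by (simp add: Q1_def insert_commute)
  also have "kneser2_move n (insert {x, b} Q1) (insert {a, c} Q1)"
  proof (rule kneser2_move_in_4set[OF n5 T])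
    show "\<forall>e\<in>insert {a, c} (insert {x, b} Q1). card e = 2"
      using D by (simp add: Q1_def)
    show "\<Union>(insert {a, c} (insert {x, b} Q1)) \<subseteq> ?T"
      by (auto simp: Q1_def)
    show "{x, b} \<notin> Q1" "{a, c} \<notin> Q1" "{x, b} \<inter> {a, c} = {}"
      using D by (auto simp: Q1_def doubleton_eq_iff)
  qed
  then have "(kneser2_move n)\<^sup>*\<^sup>* (insert {x, b} Q1) (insert {a, c} Q1)"
    by (rule r_into_rtranclp)
  also have "insert {a, c} Q1 = insert {x, c} Q2"
    by (simp add: Q1_def Q2_def insert_commute)
  also have "kneser2_move n (insert {x, c} Q2) (insert {a, b} Q2)"
  proof (rule kneser2_move_in_4set[OF n5 T])
    show "\<forall>e\<in>insert {a, b} (insert {x, c} Q2). card e = 2"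
      using D by (simp add: Q2_def)
    show "\<Union>(insert {a, b} (insert {x, c} Q2)) \<subseteq> ?T"
      by (auto simp: Q2_def)
    show "{x, c} \<notin> Q2" "{a, b} \<notin> Q2" "{x, c} \<inter> {a, b} = {}"
      using D by (auto simp: Q2_def doubleton_eq_iff)
  qed
  also have "insert {a, b} Q2 = {{a, x}, {a, b}, {a, c}, {b, c}}"
    by (simp add: Q2_def insert_commute)
  finally show ?thesis .
qed

lemma kneser2_star_centre_swap:
  assumes n5: "5 \<le> n" and x: "x \<in> {1..n}" and L: "L \<subseteq> {1..n}" "card L = 4" "x \<notin> L"
    and a: "a \<in> L"
  shows "(kneser2_move n)\<^sup>*\<^sup>* (star_pairs x L) (star_pairs a (insert x (L - {a})))"
proof -
  have "card (L - {a}) = 3"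
    using L(2) a by simp
  then obtain b c d where bcd: "L - {a} = {b, c, d}" "b \<noteq> c" "b \<noteq> d" "c \<noteq> d"
    unfolding card_3_iff by blast
  then have L_eq: "L = insert d {a, b, c}" "insert x (L - {a}) = insert d {x, b, c}"
    using a by (auto simp: insert_commute)
  have D: "distinct [x, a, b, c]" "d \<notin> {x, a, b, c}"
    using a L(3) bcd by auto
  have range: "{x, a, b, c, d} \<subseteq> {1..n}"
    using x L(1) L_eq(1) by auto
  have "kneser2_move n (star_pairs x L) (insert {b, c} (star_pairs x {a, b, c}))"
    unfolding L_eq(1) using range D by (intro kneser2_star_to_4set_move[OF n5 x]) auto
  then have "(kneser2_move n)\<^sup>*\<^sup>* (star_pairs x L) (insert {b, c} (star_pairs x {a, b, c}))"
    by (rule r_into_rtranclp)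
  also have "insert {b, c} (star_pairs x {a, b, c}) = {{x, a}, {x, b}, {x, c}, {b, c}}"
    by (simp add: star_pairs_def insert_commute)
  also have "(kneser2_move n)\<^sup>*\<^sup>* \<dots> {{a, x}, {a, b}, {a, c}, {b, c}}"
    using range D(1) by (intro kneser2_4set_centre_swap[OF n5]) auto
  also have "\<dots> = insert {b, c} (star_pairs a {x, b, c})"
    by (simp add: star_pairs_def insert_commute)
  also have "kneser2_move n \<dots> (star_pairs a (insert x (L - {a})))"
  proof (rule legal_move_sym[OF symp_kneser2_E])
    show "gp_set (kneser2_V n) kneser2_E (star_pairs a (insert x (L - {a})))"
      using x L a by (intro kneser2_gp_set_star_pairs[OF n5]) auto
    show "kneser2_move n (star_pairs a (insert x (L - {a}))) (insert {b, c} (star_pairs a {x, b, c}))"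
      unfolding L_eq(2) using range D by (intro kneser2_star_to_4set_move[OF n5]) auto
  qed
  finally show ?thesis .
qed

lemma kneser2_star_leaves_connected:
  assumes n5: "5 \<le> n" and x: "x \<in> {1..n}" and L: "L \<subseteq> {1..n}" "card L = 4" "x \<notin> L"
    and L': "L' \<subseteq> {1..n}" "card L' = 4" "x \<notin> L'"
  shows "(kneser2_move n)\<^sup>*\<^sup>* (star_pairs x L) (star_pairs x L')"
  using L
proof (induction "card (L' - L)" arbitrary: L)
  case 0
  have "finite L'"
    using L'(2) by (simp add: card_ge_0_finite)
  then have "L' \<subseteq> L"
    using 0(1) by simp
  then have "L' = L"
    using 0(3) L'(2) by (simp add: card_ge_0_finite card_subset_eq)
  then show ?case
    by simp
next
  case (Suc m)
  have "finite L'" "finite L"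
    using L'(2) Suc.prems(2) by (simp_all add: card_ge_0_finite)
  have "L' - L \<noteq> {}"
    using Suc.hyps(2) by (metis card.empty nat.distinct(1))
  then obtain e where e: "e \<in> L'" "e \<notin> L"
    by blast
  have "\<not> L \<subseteq> L'"
    using card_subset_eq[OF \<open>finite L'\<close>, of L] Suc.prems(2) L'(2) e by auto
  then obtain d where d: "d \<in> L" "d \<notin> L'"
    by blast
  define L3 where "L3 = L - {d}"
  have L3: "L3 \<subseteq> {1..n}" "card L3 = 3" "x \<notin> L3"
    using Suc.prems d by (auto simp: L3_def)
  have "L = insert d L3"
    using d by (auto simp: L3_def)
  have "(kneser2_move n)\<^sup>*\<^sup>* (star_pairs x (insert d L3)) (star_pairs x (insert e L3))"
    using Suc.prems(1,3) d e L'(1,3) by (intro kneser2_star_leaf_swap[OF n5 x L3]) (auto simp: L3_def)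
  moreover have "(kneser2_move n)\<^sup>*\<^sup>* (star_pairs x (insert e L3)) (star_pairs x L')"
  proof (rule Suc.hyps(1))
    have "L' - insert e L3 = (L' - L) - {e}"
      using d(2) by (auto simp: L3_def)
    then show "m = card (L' - insert e L3)"
      using Suc.hyps(2) e \<open>finite L'\<close> by simp
    show "insert e L3 \<subseteq> {1..n}" "card (insert e L3) = 4" "x \<notin> insert e L3"
      using L3 e L'(1,3) \<open>finite L\<close> by (auto simp: L3_def)
  qed
  ultimately show ?case
    using \<open>L = insert d L3\<close> by (metis rtranclp_trans)
qed

lemma kneser2_star_reaches_pair:
  assumes n5: "5 \<le> n" and pq: "p \<in> {1..n}" "q \<in> {1..n}" "p \<noteq> q"
  shows "\<exists>T. (kneser2_move n)\<^sup>*\<^sup>* (star_pairs 1 {2, 3, 4, 5}) T \<and> {p, q} \<in> T"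
proof -
  have reach: "(kneser2_move n)\<^sup>*\<^sup>* (star_pairs 1 {2, 3, 4, 5}) (star_pairs 1 L)"
    if "L \<subseteq> {2..n}" "card L = 4" for L
    using that n5 by (intro kneser2_star_leaves_connected) auto
  have extend: "\<exists>L. A \<subseteq> L \<and> L \<subseteq> {2..n} \<and> card L = 4" if "A \<subseteq> {2..n}" "card A \<le> 4" for A
    using exists_subset_between[of A 4 "{2..n}"] that n5 by auto
  show ?thesis
  proof (cases "p = 1 \<or> q = 1")
    case True
    have "\<exists>r\<in>{2..n}. {p, q} = {1, r}"
    proof (cases "p = 1")
      case False
      then have "q = 1"
        using True by simp
      then show ?thesis
        using pq False by (intro bexI[of _ p]) (auto simp: insert_commute)
    qed (use pq in auto)
    then obtain r where r: "r \<in> {2..n}" "{p, q} = {1, r}"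
      by blast
    moreover have "\<exists>L. {r} \<subseteq> L \<and> L \<subseteq> {2..n} \<and> card L = 4"
      using r(1) by (intro extend) auto
    ultimately show ?thesis
      using reach by (auto simp: star_pairs_def)
  next
    case False
    then have "\<exists>L. {p, q} \<subseteq> L \<and> L \<subseteq> {2..n} \<and> card L = 4"
      using pq by (intro extend) auto
    then obtain L where L: "{p, q} \<subseteq> L" "L \<subseteq> {2..n}" "card L = 4"
      by blast
    have "(kneser2_move n)\<^sup>*\<^sup>* (star_pairs 1 L) (star_pairs p (insert 1 (L - {p})))"
      by (rule kneser2_star_centre_swap[OF n5]) (use L n5 in auto)
    moreover have "{p, q} \<in> star_pairs p (insert 1 (L - {p}))"
      unfolding star_pairs_def using pq(3) L(1) by (intro rev_image_eqI[of q]) auto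
    ultimately show ?thesis
      using rtranclp_trans[OF reach[OF L(2,3)]] by blast
  qed
qed

lemma kneser2_star_mobile:
  assumes n5: "5 \<le> n"
  shows "mobile_gp_set (kneser2_V n) kneser2_E (star_pairs 1 {2, 3, 4, 5})"
proof (rule mobile_gp_setI[OF finite_kneser2_V symp_kneser2_E])
  show "gp_set (kneser2_V n) kneser2_E (star_pairs 1 {2, 3, 4, 5})"
    using n5 by (intro kneser2_gp_set_star_pairs) auto
  fix y
  assume "y \<in> kneser2_V n"
  then obtain p q where "y = {p, q}" "p \<noteq> q" "p \<in> {1..n}" "q \<in> {1..n}"
    by (rule kneser2_V_elim)
  then show "\<exists>T. (kneser2_move n)\<^sup>*\<^sup>* (star_pairs 1 {2, 3, 4, 5}) T \<and> y \<in> T"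
    using kneser2_star_reaches_pair[OF n5] by blast
qed

section \<open>Matchings are mobile\<close>

lemma kneser2_disjoint_move:
  assumes n5: "5 \<le> n" and X: "X \<subseteq> kneser2_V n" "pairwise disjnt X" "u \<in> X"
    and v: "v \<subseteq> {1..n} - \<Union>X" "card v = 2"
  shows "kneser2_move n X (insert v (X - {u}))" "pairwise disjnt (insert v (X - {u}))"
proof -
  have "v \<in> kneser2_V n"
    using v by (auto simp: kneser2_V_def)
  have "v \<noteq> {}"
    using v(2) by auto
  then have "v \<notin> X - {u}"
    using v(1) by blast
  have disjoint: "pairwise disjnt (insert v (X - {u}))"
    using X(2) v(1) unfolding pairwise_def disjnt_def by blast
  show "pairwise disjnt (insert v (X - {u}))"
    by (rule disjoint)
  have "kneser2_move n (insert u (X - {u})) (insert v (X - {u}))"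
  proof (rule kneser2_legal_moveI[OF n5])
    show "u \<inter> v = {}"
      using X(3) v(1) by blast
    show "insert u (X - {u}) \<subseteq> kneser2_V n"
      using X(1,3) by blast
  qed (use \<open>v \<in> kneser2_V n\<close> \<open>v \<notin> X - {u}\<close> kneser2_P3_free_if_disjoint[OF disjoint] in auto)
  then show "kneser2_move n X (insert v (X - {u}))"
    using X(3) by (simp add: insert_absorb)
qed

lemma card_kneser2_uncovered:
  assumes "X \<subseteq> kneser2_V n" "pairwise disjnt X"
  shows "card ({1..n} - \<Union>X) = n - 2 * card X"
proof -
  have "\<Union>X \<subseteq> {1..n}" "\<forall>a\<in>X. card a = 2"
    using assms(1) by (auto simp: kneser2_V_def)
  moreover from this(1) have "finite (\<Union>X)"
    by (rule finite_subset) simp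
  ultimately show ?thesis
    using card_Diff_subset[OF \<open>finite (\<Union>X)\<close>] card_Union_disjoint_pairs[OF _ assms(2)] by simp
qed

lemma kneser2_disjoint_uncover:
  assumes n5: "5 \<le> n" and X: "X \<subseteq> kneser2_V n" "pairwise disjnt X" "2 * card X + 3 \<le> n"
    and p: "p \<in> {1..n}"
  obtains Y where "(kneser2_move n)\<^sup>*\<^sup>* X Y" "Y \<subseteq> kneser2_V n" "pairwise disjnt Y" "card Y = card X"
    "p \<notin> \<Union>Y" "q \<notin> \<Union>X \<Longrightarrow> q \<notin> \<Union>Y"
proof (cases "p \<in> \<Union>X")
  case False
  then show thesis
    using that[of X] X by simp
next
  case True
  then obtain u where u: "u \<in> X" "p \<in> u"
    by blast
  have "3 \<le> card ({1..n} - \<Union>X)"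
    using card_kneser2_uncovered[OF X(1,2)] X(3) by simp
  then have "2 \<le> card ({1..n} - \<Union>X - {q})"
    using card_Diff_singleton_if[of "{1..n} - \<Union>X" q] by (auto split: if_splits)
  then obtain v where v: "v \<subseteq> {1..n} - \<Union>X - {q}" "card v = 2"
    by (meson obtain_subset_with_card_n)
  let ?Y = "insert v (X - {u})"
  have move: "kneser2_move n X ?Y" "pairwise disjnt ?Y"
    using kneser2_disjoint_move[OF n5 X(1,2) u(1), of v] v by auto
  have "p \<notin> a" if "a \<in> X - {u}" for a
    using that u pairwiseD[OF X(2) u(1), of a] by (auto simp: disjnt_def)
  then have "p \<notin> \<Union>?Y"
    using v(1) u by blast
  moreover have "card ?Y = card X"
    using legal_move_card[OF move(1)] finite_subset[OF X(1) finite_kneser2_V] by blast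
  moreover have "?Y \<subseteq> kneser2_V n"
    using legal_move_gp_set[OF move(1)] by (simp add: gp_set_def)
  moreover have "q \<notin> \<Union>X \<Longrightarrow> q \<notin> \<Union>?Y"
    using v(1) by blast
  ultimately show thesis
    using that[of ?Y] move by blast
qed

lemma kneser2_disjoint_reaches_pair:
  assumes n5: "5 \<le> n" and X: "X \<subseteq> kneser2_V n" "pairwise disjnt X" "2 * card X + 3 \<le> n"
    "X \<noteq> {}" and pq: "p \<in> {1..n}" "q \<in> {1..n}" "p \<noteq> q"
  shows "\<exists>Y. (kneser2_move n)\<^sup>*\<^sup>* X Y \<and> {p, q} \<in> Y"
proof -
  obtain X1 where X1: "(kneser2_move n)\<^sup>*\<^sup>* X X1" "X1 \<subseteq> kneser2_V n" "pairwise disjnt X1"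
    "card X1 = card X" "q \<notin> \<Union>X1"
    using kneser2_disjoint_uncover[OF n5 X(1-3) pq(2)] by metis
  obtain X2 where X2: "(kneser2_move n)\<^sup>*\<^sup>* X1 X2" "X2 \<subseteq> kneser2_V n" "pairwise disjnt X2"
    "card X2 = card X" "p \<notin> \<Union>X2" "q \<notin> \<Union>X2"
    using kneser2_disjoint_uncover[OF n5 X1(2,3) _ pq(1), of q] X(3) X1(4,5) by metis
  have "X2 \<noteq> {}"
    using X2(4) X(4) finite_subset[OF X(1) finite_kneser2_V] by auto
  then obtain u where "u \<in> X2"
    by blast
  have "{p, q} \<subseteq> {1..n} - \<Union>X2" "card {p, q} = 2"
    using pq X2(5,6) by auto
  then have "kneser2_move n X2 (insert {p, q} (X2 - {u}))"
    using kneser2_disjoint_move[OF n5 X2(2,3) \<open>u \<in> X2\<close>] by blast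
  then show ?thesis
    using X1(1) X2(1) by (meson rtranclp.rtrancl_into_rtrancl rtranclp_trans insertI1)
qed

definition initial_matching :: "nat \<Rightarrow> nat set set" where
  "initial_matching k = (\<lambda>i. {2 * i + 1, 2 * i + 2}) ` {..<k}"

lemma initial_matching_subset_kneser2_V: "2 * k \<le> n \<Longrightarrow> initial_matching k \<subseteq> kneser2_V n"
  by (auto simp: initial_matching_def kneser2_V_def)

lemma pairwise_disjnt_initial_matching: "pairwise disjnt (initial_matching k)"
  unfolding initial_matching_def pairwise_def disjnt_def by auto presburger+

lemma card_initial_matching: "card (initial_matching k) = k"
proof -
  have "inj_on (\<lambda>i. {2 * i + 1, 2 * i + 2 :: nat}) {..<k}"
    by (rule inj_onI) (auto simp: doubleton_eq_iff)
  then show ?thesis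
    by (simp add: initial_matching_def card_image)
qed

lemma kneser2_initial_matching_mobile:
  assumes n5: "5 \<le> n" and "1 \<le> k" "2 * k + 3 \<le> n"
  shows "mobile_gp_set (kneser2_V n) kneser2_E (initial_matching k)"
proof (rule mobile_gp_setI[OF finite_kneser2_V symp_kneser2_E])
  have M: "initial_matching k \<subseteq> kneser2_V n" "pairwise disjnt (initial_matching k)"
    "2 * card (initial_matching k) + 3 \<le> n" "initial_matching k \<noteq> {}"
    using assms initial_matching_subset_kneser2_V[of k n] pairwise_disjnt_initial_matching
      card_initial_matching[of k] by auto
  then show "gp_set (kneser2_V n) kneser2_E (initial_matching k)"
    using kneser2_gp_set_iff[OF n5] kneser2_P3_free_if_disjoint by blast
  fix y
  assume "y \<in> kneser2_V n"
  then obtain p q where "y = {p, q}" "p \<noteq> q" "p \<in> {1..n}" "q \<in> {1..n}"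
    by (rule kneser2_V_elim)
  then show "\<exists>T. (kneser2_move n)\<^sup>*\<^sup>* (initial_matching k) T \<and> y \<in> T"
    using kneser2_disjoint_reaches_pair[OF n5 M] by blast
qed

theorem theorem3p1:
  fixes n :: nat
  assumes "n \<ge> 5"
  shows "mob (kneser2_V n) kneser2_E = max 4 ((n - 3) div 2)"
proof -
  define S\<^sub>0 where "S\<^sub>0 = (if (n - 3) div 2 \<le> 4 then star_pairs 1 {2, 3, 4, 5}
    else initial_matching ((n - 3) div 2))"
  have "mobile_gp_set (kneser2_V n) kneser2_E S\<^sub>0"
    using kneser2_star_mobile[OF assms] kneser2_initial_matching_mobile[OF assms]
    by (auto simp: S\<^sub>0_def)
  moreover have "card S\<^sub>0 = max 4 ((n - 3) div 2)"
    by (simp add: S\<^sub>0_def card_star_pairs card_initial_matching)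
  moreover have "card S \<le> max 4 ((n - 3) div 2)" if "mobile_gp_set (kneser2_V n) kneser2_E S" for S
    using kneser2_mobile_card_bound[OF assms that] by linarith
  ultimately show ?thesis
    by (intro mob_eqI[OF finite_kneser2_V])
qed

end
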